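(* With $\omega>0$, $c\in[0,1]$, $h>0$ satisfying the stability condition and $\rho(c,\omega,h)$ as in Proposition 9.3, one has $$\rho(c,\omega,h)=\frac12\,\frac{h^4r^2}{(1+\omega^{-2})(1+\omega^{-2}-h^2r)},$$ where $$r=r(c,\omega,h)=\tfrac14(1-c^2+\omega^{-2})^2+c^2(1-c^2+\omega^{-2})R(ch),\qquad R(\zeta)=\frac{1-\zeta\cot\zeta}{\zeta^2}.$$
   Context: Setting of Proposition 9.3: $H=\frac12\omega^{-2}p^2+\frac12(\omega^2+1)q^2$; $\psi_h=\varphi^{(B)}_{h/2}\circ\varphi^{(A)}_h\circ\varphi^{(B)}_{h/2}$ with $(A)$: $\dot q=\omega^{-2}p,\dot p=-c^2\omega^2q$ and $(B)$: $\dot q=0,\dot p=-((1-c^2)\omega^2+1)q$; stability: $ch+2\arctan(h(1+(1-c^2)\omega^2)/(2c\omega^2))<\pi$ ($c>0$), $h<2\omega/\sqrt{1+\omega^2}$ ($c=0$); $\cos\theta_h=\frac12\operatorname{trace}$ of the one-step matrix; $\chi_h=\sin(ch)/(c\omega^2\sin\theta_h)$ ($c>0$) or $h/(\omega^2\sin\theta_h)$ ($c=0$); $\hat\chi_h^2=(\omega^2+\omega^4)\chi_h^2$; $\rho=\frac12(\hat\chi_h^2+\hat\chi_h^{-2}-2)$. For $c=0$ the term involving $R$ is absent (multiplied by $c^2=0$). *)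

theory Defs
  imports "HOL-Analysis.Analysis"
begin

text \<open>Setting of Proposition 9.3. States are column vectors (q,p); maps are 2x2 matrices.\<close>

definition mat2 :: "real \<Rightarrow> real \<Rightarrow> real \<Rightarrow> real \<Rightarrow> real^2^2" where
  "mat2 a b c d = vector [vector [a, b], vector [c, d]]"

text \<open>Exact flow of (A): q' = w^-2 p, p' = -c^2 w^2 q, over time t.\<close>
definition flowA :: "real \<Rightarrow> real \<Rightarrow> real \<Rightarrow> real^2^2" where
  "flowA c w t = (if c = 0 then mat2 1 (t / w\<^sup>2) 0 1
     else mat2 (cos (c*t)) (sin (c*t) / (c * w\<^sup>2)) (- c * w\<^sup>2 * sin (c*t)) (cos (c*t)))"

text \<open>Exact flow of (B): q' = 0, p' = -((1-c^2) w^2 + 1) q, over time t.\<close>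
definition flowB :: "real \<Rightarrow> real \<Rightarrow> real \<Rightarrow> real^2^2" where
  "flowB c w t = mat2 1 0 (- t * ((1 - c\<^sup>2) * w\<^sup>2 + 1)) 1"

definition step_matrix :: "real \<Rightarrow> real \<Rightarrow> real \<Rightarrow> real^2^2" where
  "step_matrix c w h = flowB c w (h/2) ** flowA c w h ** flowB c w (h/2)"

definition stable :: "real \<Rightarrow> real \<Rightarrow> real \<Rightarrow> bool" where
  "stable c w h = (if c > 0
     then c*h + 2 * arctan (h * (1 + (1 - c\<^sup>2) * w\<^sup>2) / (2 * c * w\<^sup>2)) < pi
     else h < 2 * w / sqrt (1 + w\<^sup>2))"

definition theta :: "real \<Rightarrow> real \<Rightarrow> real \<Rightarrow> real" where
  "theta c w h = arccos (trace (step_matrix c w h) / 2)"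

definition chi :: "real \<Rightarrow> real \<Rightarrow> real \<Rightarrow> real" where
  "chi c w h = (if c > 0 then sin (c*h) / (c * w\<^sup>2 * sin (theta c w h))
                else h / (w\<^sup>2 * sin (theta c w h)))"

definition chi_hat_sq :: "real \<Rightarrow> real \<Rightarrow> real \<Rightarrow> real" where
  "chi_hat_sq c w h = (w\<^sup>2 + w^4) * (chi c w h)\<^sup>2"

definition rho :: "real \<Rightarrow> real \<Rightarrow> real \<Rightarrow> real" where
  "rho c w h = (chi_hat_sq c w h + inverse (chi_hat_sq c w h) - 2) / 2"

definition Rfun :: "real \<Rightarrow> real" where
  "Rfun z = (1 - z * cot z) / z\<^sup>2"

definition rfun :: "real \<Rightarrow> real \<Rightarrow> real \<Rightarrow> real" where
  "rfun c w h = (1 - c\<^sup>2 + 1 / w\<^sup>2)\<^sup>2 / 4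
     + (if c = 0 then 0 else c\<^sup>2 * (1 - c\<^sup>2 + 1 / w\<^sup>2) * Rfun (c*h))"

end

theory Submission
  imports Defs
begin

text \<open>Let \<open>x\<close> be half the trace of the one-step matrix, \<open>u = 1 + \<omega>\<^sup>-\<^sup>2\<close> and
  \<open>D = u - h\<^sup>2 r\<close>. Writing \<open>s = sin(ch)/c\<close> (\<open>s = h\<close> for \<open>c = 0\<close>), a direct computation gives
  \<open>1 - x\<^sup>2 = s\<^sup>2 D\<close>; this is where \<open>R(ch)\<close> comes from. Stability means \<open>|x| < 1\<close>, and since
  \<open>sin\<^sup>2 \<theta>\<^sub>h = 1 - x\<^sup>2\<close> the definition of \<open>\<chi>\<^sub>h\<close> yields \<open>\<chi>\<^sub>h\<^sup>2 = u / D\<close>. Then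
  \<open>\<rho> = (u - D)\<^sup>2 / (2 u D)\<close> with \<open>u - D = h\<^sup>2 r\<close>.\<close>

definition flowA_sin :: "real \<Rightarrow> real \<Rightarrow> real" where
  "flowA_sin c t = (if c = 0 then t else sin (c * t) / c)"

lemma mat2_nth [simp]:
  "mat2 a b c d $ 1 $ 1 = a" "mat2 a b c d $ 1 $ 2 = b"
  "mat2 a b c d $ 2 $ 1 = c" "mat2 a b c d $ 2 $ 2 = d"
  by (simp_all add: mat2_def)

lemma mat2_mult:
  "mat2 a b c d ** mat2 e f g k = mat2 (a*e + b*g) (a*f + b*k) (c*e + d*g) (c*f + d*k)"
  by (simp add: vec_eq_iff forall_2 matrix_matrix_mult_def sum_2)

lemma trace_mat2: "trace (mat2 a b c d) = a + d"
  by (simp add: trace_def sum_2)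

lemma flowA_eq: "flowA c w t = mat2 (cos (c*t)) (flowA_sin c t / w\<^sup>2) (- c\<^sup>2 * w\<^sup>2 * flowA_sin c t) (cos (c*t))"
  by (simp add: flowA_def flowA_sin_def power2_eq_square mult_ac)

lemma half_trace_step_matrix:
  assumes "w \<noteq> 0"
  shows "trace (step_matrix c w h) / 2 = cos (c*h) - h * (1 - c\<^sup>2 + 1/w\<^sup>2) * flowA_sin c h / 2"
  using assms
  by (simp add: step_matrix_def flowA_eq flowB_def mat2_mult trace_mat2 field_simps power2_eq_square)

lemma one_minus_half_trace_sq:
  assumes "w \<noteq> 0" and "h \<noteq> 0"
  shows "1 - (trace (step_matrix c w h) / 2)\<^sup>2 = (flowA_sin c h)\<^sup>2 * (1 + 1/w\<^sup>2 - h\<^sup>2 * rfun c w h)"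
proof (cases "c = 0")
  case True
  then show ?thesis
    using assms by (simp add: half_trace_step_matrix rfun_def flowA_sin_def field_simps power2_eq_square)
next
  case False
  define x where "x = trace (step_matrix c w h) / 2"
  define v where "v = 1 - c\<^sup>2 + 1/w\<^sup>2"
  define S where "S = sin (c*h)"
  define C where "C = cos (c*h)"
  have x: "x = C - h * v * S / (2*c)"
    using assms False by (simp add: x_def half_trace_step_matrix flowA_sin_def v_def S_def C_def)
  define q where "q = cot (c*h)"
  have R: "h\<^sup>2 * (c\<^sup>2 * Rfun (c*h)) = 1 - c * h * q"
    using False assms(2) by (simp add: Rfun_def q_def power_mult_distrib)
  have "h\<^sup>2 * rfun c w h = h\<^sup>2 * v\<^sup>2 / 4 + v * (h\<^sup>2 * (c\<^sup>2 * Rfun (c*h)))"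
    using False by (simp add: rfun_def v_def algebra_simps)
  then have r: "h\<^sup>2 * rfun c w h = h\<^sup>2 * v\<^sup>2 / 4 + v * (1 - c * h * q)"
    by (simp only: R)
  have q: "q = C / S" by (simp add: q_def cot_def C_def S_def)
  have pyth: "C\<^sup>2 = 1 - S\<^sup>2" by (simp add: C_def S_def cos_squared_eq)
  show ?thesis
  proof (cases "S = 0")
    case True
    \<comment> \<open>both sides vanish, whatever junk value \<open>cot\<close> takes at a zero of \<open>sin\<close>\<close>
    with pyth x False show ?thesis by (simp add: x_def[symmetric] flowA_sin_def S_def)
  next
    case S0: False
    have "c\<^sup>2 * (1 - x\<^sup>2) = c\<^sup>2 * (1 - C\<^sup>2) + h * v * c * S * C - h\<^sup>2 * v\<^sup>2 * S\<^sup>2 / 4"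
      using False by (simp add: x field_simps power2_eq_square)
    also have "\<dots> = c\<^sup>2 * S\<^sup>2 + h * v * c * S * C - h\<^sup>2 * v\<^sup>2 * S\<^sup>2 / 4"
      by (simp add: pyth)
    also have "\<dots> = S\<^sup>2 * (v + c\<^sup>2 - (h\<^sup>2 * v\<^sup>2 / 4 + v * (1 - c * h * q)))"
      using S0 by (simp add: q field_simps power2_eq_square)
    also have "\<dots> = S\<^sup>2 * (v + c\<^sup>2 - h\<^sup>2 * rfun c w h)"
      by (simp only: r)
    finally show ?thesis
      using False by (simp add: x_def[symmetric] flowA_sin_def S_def[symmetric] v_def power_divide
          field_simps)
  qed
qed

text \<open>With \<open>\<phi> = arctan a\<close> one has \<open>cos \<zeta> - a sin \<zeta> = cos (\<zeta> + \<phi>) / cos \<phi>\<close>, and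
  \<open>\<phi> < \<zeta> + \<phi> < \<pi> - \<phi>\<close>.\<close>
lemma abs_cos_minus_sin_less_one:
  fixes \<zeta> a :: real
  assumes "\<zeta> > 0" "a > 0" "\<zeta> + 2 * arctan a < pi"
  shows "\<bar>cos \<zeta> - a * sin \<zeta>\<bar> < 1"
proof -
  define \<phi> where "\<phi> = arctan a"
  have \<phi>: "0 < \<phi>" "\<phi> < pi/2"
    using assms(2) arctan_ubound[of a] by (simp_all add: \<phi>_def zero_less_arctan_iff)
  have cos\<phi>: "cos \<phi> > 0" using \<phi> by (simp add: cos_gt_zero)
  have "a = sin \<phi> / cos \<phi>" using tan_arctan[of a] by (simp add: \<phi>_def tan_def)
  then have eq: "cos \<zeta> - a * sin \<zeta> = cos (\<zeta> + \<phi>) / cos \<phi>"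
    using cos\<phi> by (simp add: cos_add field_simps)
  have sum: "\<zeta> + 2 * \<phi> < pi" using assms(3) by (simp add: \<phi>_def)
  have "cos (\<zeta> + \<phi>) < cos \<phi>"
    by (rule cos_monotone_0_pi) (use \<phi> sum assms(1) in auto)
  moreover have "cos (pi - \<phi>) < cos (\<zeta> + \<phi>)"
    by (rule cos_monotone_0_pi) (use \<phi> sum assms(1) in auto)
  ultimately show ?thesis
    using cos\<phi> by (simp add: eq abs_less_iff field_simps)
qed

lemma stable_half_trace_bound:
  assumes "w > 0" "0 \<le> c" "c \<le> 1" "h > 0" "stable c w h"
  shows "\<bar>trace (step_matrix c w h) / 2\<bar> < 1"
proof (cases "c = 0")
  case True
  have "h * sqrt (1 + w\<^sup>2) < 2 * w"
    using assms(5) True by (simp add: stable_def field_simps add_pos_nonneg)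
  then have "(h * sqrt (1 + w\<^sup>2))\<^sup>2 < (2 * w)\<^sup>2"
    using assms(4) by (intro power_strict_mono) auto
  then have "h\<^sup>2 * (1 + 1/w\<^sup>2) < 4"
    using assms(1) by (simp add: power_mult_distrib field_simps)
  moreover have "h\<^sup>2 * (1 + 1/w\<^sup>2) > 0"
    using assms(4) by (simp add: add_pos_nonneg)
  moreover have "trace (step_matrix c w h) / 2 = 1 - h\<^sup>2 * (1 + 1/w\<^sup>2) / 2"
    using assms(1) True by (simp add: half_trace_step_matrix flowA_sin_def power2_eq_square)
  ultimately show ?thesis by (simp add: abs_less_iff)
next
  case False
  then have c: "c > 0" using assms(2) by simp
  define a where "a = h * (1 - c\<^sup>2 + 1/w\<^sup>2) / (2*c)"
  have "c\<^sup>2 \<le> 1" using assms(2,3) by (simp add: power_le_one)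
  then have "a > 0" using assms(1,4) c by (simp add: a_def add_nonneg_pos)
  moreover have "c*h + 2 * arctan a < pi"
    using assms(1,5) c by (simp add: stable_def a_def field_simps)
  ultimately have "\<bar>cos (c*h) - a * sin (c*h)\<bar> < 1"
    using c assms(4) by (intro abs_cos_minus_sin_less_one) auto
  then show ?thesis
    using assms(1) c by (simp add: half_trace_step_matrix flowA_sin_def a_def mult_ac)
qed

lemma chi_hat_sq_eq:
  assumes "w > 0" "0 \<le> c" "c \<le> 1" "h > 0" "stable c w h"
  shows "chi_hat_sq c w h * (1 + 1/w\<^sup>2 - h\<^sup>2 * rfun c w h) = 1 + 1/w\<^sup>2"
proof -
  define x where "x = trace (step_matrix c w h) / 2"
  define D where "D = 1 + 1/w\<^sup>2 - h\<^sup>2 * rfun c w h"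
  define s where "s = flowA_sin c h"
  have "\<bar>x\<bar> < 1" using stable_half_trace_bound[OF assms] by (simp add: x_def)
  then have pos: "1 - x\<^sup>2 > 0" by (simp add: abs_square_less_1)
  have sin\<theta>: "(sin (theta c w h))\<^sup>2 = 1 - x\<^sup>2"
    using \<open>\<bar>x\<bar> < 1\<close> pos by (simp add: theta_def x_def[symmetric] sin_arccos abs_less_iff)
  have sD: "1 - x\<^sup>2 = s\<^sup>2 * D"
    using assms by (simp add: one_minus_half_trace_sq x_def s_def D_def)
  have "chi c w h = s / (w\<^sup>2 * sin (theta c w h))"
    using assms(2) by (auto simp: chi_def s_def flowA_sin_def)
  then have "chi_hat_sq c w h = (w\<^sup>2 + w^4) * s\<^sup>2 / (w\<^sup>2)\<^sup>2 / (sin (theta c w h))\<^sup>2"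
    by (simp add: chi_hat_sq_def power_divide power_mult_distrib)
  also have "\<dots> = (1 + 1/w\<^sup>2) * s\<^sup>2 / (1 - x\<^sup>2)"
    unfolding sin\<theta> using assms(1) pos by (simp add: field_simps eval_nat_numeral)
  also have "\<dots> = (1 + 1/w\<^sup>2) * s\<^sup>2 / (s\<^sup>2 * D)"
    by (simp only: sD)
  finally have X: "chi_hat_sq c w h = (1 + 1/w\<^sup>2) * s\<^sup>2 / (s\<^sup>2 * D)" .
  from sD pos have "s \<noteq> 0" "D \<noteq> 0" by auto
  with X show ?thesis by (simp add: D_def[symmetric])
qed

lemma half_excess_inverse_sum:
  fixes u D :: real
  assumes "u \<noteq> 0" "D \<noteq> 0"
  shows "(u/D + inverse (u/D) - 2) / 2 = (u - D)\<^sup>2 / (2 * u * D)"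
  using assms by (simp add: field_simps power2_eq_square)

theorem proposition9p4:
  fixes c w h :: real
  assumes "w > 0" and "0 \<le> c" and "c \<le> 1" and "h > 0" and "stable c w h"
  shows "rho c w h =
    (1/2) * (h^4 * (rfun c w h)\<^sup>2) /
      ((1 + 1 / w\<^sup>2) * (1 + 1 / w\<^sup>2 - h\<^sup>2 * rfun c w h))"
proof -
  define u where "u = 1 + 1/w\<^sup>2"
  define D where "D = u - h\<^sup>2 * rfun c w h"
  have "u > 0" by (simp add: u_def add_pos_nonneg)
  moreover have X: "chi_hat_sq c w h * D = u"
    using chi_hat_sq_eq[OF assms] by (simp add: u_def D_def)
  ultimately have "D \<noteq> 0" by auto
  with X have "chi_hat_sq c w h = u / D" by (simp add: field_simps)
  then have "rho c w h = (u/D + inverse (u/D) - 2) / 2"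
    by (simp add: rho_def)
  also have "\<dots> = (u - D)\<^sup>2 / (2 * u * D)"
    using \<open>u > 0\<close> \<open>D \<noteq> 0\<close> by (intro half_excess_inverse_sum) auto
  also have "\<dots> = (1/2) * (h^4 * (rfun c w h)\<^sup>2) / (u * D)"
    by (simp add: D_def power_mult_distrib field_simps flip: power_mult)
  finally show ?thesis by (simp add: u_def D_def)
qed

end
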